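(* Let $K$ be a field, $0<n<\omega$, and $(R_i\mid i<n)$ a sequence of $K$-algebras such that $R_0$ possesses a strong multiplicative basis $B_0$ containing a non-zero idempotent $e$, and each $R_i$ ($0<i<n$) has a multiplicative basis. Then the $K$-algebra $R=\prod_{i<n}R_i$ has a strong multiplicative basis.
   Context: A $K$-linear basis $B$ of a $K$-algebra is multiplicative if for all $b,b'\in B$ either $bb'=0$ or $bb'\in B$, and strong multiplicative if $bb'\in B$ for all $b,b'\in B$. *)

theory Defs
  imports Main "HOL-Library.FuncSet"
begin

record ('k, 'a) kalg =
  alg_carrier :: "'a set"
  alg_add :: "'a \<Rightarrow> 'a \<Rightarrow> 'a"
  alg_zero :: "'a"
  alg_smult :: "'k \<Rightarrow> 'a \<Rightarrow> 'a"
  alg_mult :: "'a \<Rightarrow> 'a \<Rightarrow> 'a"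

definition is_kalg :: "('k::field, 'a) kalg \<Rightarrow> bool" where
  "is_kalg A \<longleftrightarrow>
     (let C = alg_carrier A; p = alg_add A; z = alg_zero A; s = alg_smult A; m = alg_mult A in
       z \<in> C \<and>
       (\<forall>x\<in>C. \<forall>y\<in>C. p x y \<in> C) \<and>
       (\<forall>a. \<forall>x\<in>C. s a x \<in> C) \<and>
       (\<forall>x\<in>C. \<forall>y\<in>C. m x y \<in> C) \<and>
       (\<forall>x\<in>C. \<forall>y\<in>C. \<forall>w\<in>C. p (p x y) w = p x (p y w)) \<and>
       (\<forall>x\<in>C. \<forall>y\<in>C. p x y = p y x) \<and>
       (\<forall>x\<in>C. p z x = x) \<and>
       (\<forall>x\<in>C. \<exists>y\<in>C. p x y = z) \<and>
       (\<forall>a. \<forall>x\<in>C. \<forall>y\<in>C. s a (p x y) = p (s a x) (s a y)) \<and>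
       (\<forall>a b. \<forall>x\<in>C. s (a + b) x = p (s a x) (s b x)) \<and>
       (\<forall>a b. \<forall>x\<in>C. s (a * b) x = s a (s b x)) \<and>
       (\<forall>x\<in>C. s 1 x = x) \<and>
       (\<forall>x\<in>C. \<forall>y\<in>C. \<forall>w\<in>C. m (p x y) w = p (m x w) (m y w)) \<and>
       (\<forall>x\<in>C. \<forall>y\<in>C. \<forall>w\<in>C. m x (p y w) = p (m x y) (m x w)) \<and>
       (\<forall>a. \<forall>x\<in>C. \<forall>y\<in>C. m (s a x) y = s a (m x y)) \<and>
       (\<forall>a. \<forall>x\<in>C. \<forall>y\<in>C. m x (s a y) = s a (m x y)) \<and>
       (\<forall>x\<in>C. \<forall>y\<in>C. \<forall>w\<in>C. m (m x y) w = m x (m y w)))"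

primrec lin_comb :: "('k, 'a) kalg \<Rightarrow> ('a \<Rightarrow> 'k) \<Rightarrow> 'a list \<Rightarrow> 'a" where
  "lin_comb A c [] = alg_zero A"
| "lin_comb A c (b # bs) = alg_add A (alg_smult A (c b) b) (lin_comb A c bs)"

definition is_lin_basis :: "('k::field, 'a) kalg \<Rightarrow> 'a set \<Rightarrow> bool" where
  "is_lin_basis A B \<longleftrightarrow>
     B \<subseteq> alg_carrier A \<and>
     (\<forall>bs c. distinct bs \<and> set bs \<subseteq> B \<and> lin_comb A c bs = alg_zero A \<longrightarrow>
              (\<forall>b\<in>set bs. c b = 0)) \<and>
     (\<forall>x\<in>alg_carrier A. \<exists>bs c. distinct bs \<and> set bs \<subseteq> B \<and> x = lin_comb A c bs)"

definition mult_basis :: "('k::field, 'a) kalg \<Rightarrow> 'a set \<Rightarrow> bool" where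
  "mult_basis A B \<longleftrightarrow> is_lin_basis A B \<and>
     (\<forall>b\<in>B. \<forall>b'\<in>B. alg_mult A b b' = alg_zero A \<or> alg_mult A b b' \<in> B)"

definition strong_mult_basis :: "('k::field, 'a) kalg \<Rightarrow> 'a set \<Rightarrow> bool" where
  "strong_mult_basis A B \<longleftrightarrow> is_lin_basis A B \<and>
     (\<forall>b\<in>B. \<forall>b'\<in>B. alg_mult A b b' \<in> B)"

definition prod_alg :: "nat \<Rightarrow> (nat \<Rightarrow> ('k, 'a) kalg) \<Rightarrow> ('k, nat \<Rightarrow> 'a) kalg" where
  "prod_alg n R = \<lparr>
     alg_carrier = (\<Pi>\<^sub>E i\<in>{..<n}. alg_carrier (R i)),
     alg_add = (\<lambda>f g. restrict (\<lambda>i. alg_add (R i) (f i) (g i)) {..<n}),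
     alg_zero = restrict (\<lambda>i. alg_zero (R i)) {..<n},
     alg_smult = (\<lambda>a f. restrict (\<lambda>i. alg_smult (R i) a (f i)) {..<n}),
     alg_mult = (\<lambda>f g. restrict (\<lambda>i. alg_mult (R i) (f i) (g i)) {..<n}) \<rparr>"

end

theory Submission
  imports Defs
begin

text \<open>
  The coordinate embeddings of bases of the factors form a basis of the product. Adding
  \<open>(e, 0, \<dots>, 0)\<close> to every basis vector supported in a coordinate \<open>i > 0\<close> is a unitriangular
  change of basis, so the vectors \<open>(b, 0, \<dots>, 0)\<close> with \<open>b \<in> B\<^sub>0\<close>, together with the vectors
  having \<open>e\<close> in coordinate \<open>0\<close> and some \<open>d \<in> B\<^sub>i\<close> in one coordinate \<open>i > 0\<close>, again form a
  basis. It is strongly multiplicative: coordinate \<open>0\<close> of a product of two such vectors lies in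
  \<open>B\<^sub>0\<close> (with \<open>e e = e\<close> when both factors carry \<open>e\<close>), and in the coordinates \<open>i > 0\<close> the
  product is either an element of \<open>B\<^sub>i\<close> or \<open>0\<close>; in the latter case the product collapses to
  \<open>(e, 0, \<dots>, 0)\<close>.
\<close>

section \<open>Linear algebra in a \<open>K\<close>-algebra\<close>

lemma filter_eq_singleton: "distinct xs \<Longrightarrow> x \<in> set xs \<Longrightarrow> filter (\<lambda>y. y = x) xs = [x]"
  by (induction xs) (auto simp: filter_empty_conv)

primrec alg_sum_list :: "('k, 'a) kalg \<Rightarrow> ('b \<Rightarrow> 'a) \<Rightarrow> 'b list \<Rightarrow> 'a" where
  "alg_sum_list A g [] = alg_zero A"
| "alg_sum_list A g (x # xs) = alg_add A (g x) (alg_sum_list A g xs)"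

lemma lin_comb_conv_alg_sum_list: "lin_comb A c xs = alg_sum_list A (\<lambda>b. alg_smult A (c b) b) xs"
  by (induction xs) auto

lemma alg_sum_list_map: "alg_sum_list A g (map f xs) = alg_sum_list A (g \<circ> f) xs"
  by (induction xs) auto

lemma alg_sum_list_cong:
  "(\<And>x. x \<in> set xs \<Longrightarrow> g x = h x) \<Longrightarrow> alg_sum_list A g xs = alg_sum_list A h xs"
  by (induction xs) auto

lemma lin_comb_cong: "(\<And>x. x \<in> set xs \<Longrightarrow> c x = d x) \<Longrightarrow> lin_comb A c xs = lin_comb A d xs"
  by (induction xs) auto

definition lin_indep :: "('k::field, 'a) kalg \<Rightarrow> 'a set \<Rightarrow> bool" where
  "lin_indep A B \<longleftrightarrow>
     (\<forall>bs c. distinct bs \<and> set bs \<subseteq> B \<and> lin_comb A c bs = alg_zero A \<longrightarrow> (\<forall>b\<in>set bs. c b = 0))"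

definition lin_span :: "('k::field, 'a) kalg \<Rightarrow> 'a set \<Rightarrow> 'a set" where
  "lin_span A B = {x. \<exists>bs c. distinct bs \<and> set bs \<subseteq> B \<and> x = lin_comb A c bs}"

lemma is_lin_basis_iff:
  "is_lin_basis A B \<longleftrightarrow> B \<subseteq> alg_carrier A \<and> lin_indep A B \<and> alg_carrier A \<subseteq> lin_span A B"
  unfolding is_lin_basis_def lin_indep_def lin_span_def by auto

lemma lin_indepD:
  "lin_indep A B \<Longrightarrow> distinct bs \<Longrightarrow> set bs \<subseteq> B \<Longrightarrow> lin_comb A c bs = alg_zero A \<Longrightarrow>
    b \<in> set bs \<Longrightarrow> c b = 0"
  unfolding lin_indep_def by blast

lemma lin_spanI: "distinct bs \<Longrightarrow> set bs \<subseteq> B \<Longrightarrow> lin_comb A c bs \<in> lin_span A B"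
  unfolding lin_span_def by blast

context
  fixes A :: "('k::field, 'a) kalg"
  assumes A: "is_kalg A"
begin

lemma kalg_zero_closed: "alg_zero A \<in> alg_carrier A"
  using A unfolding is_kalg_def Let_def by (elim conjE) meson

lemma kalg_add_closed: "x \<in> alg_carrier A \<Longrightarrow> y \<in> alg_carrier A \<Longrightarrow> alg_add A x y \<in> alg_carrier A"
  using A unfolding is_kalg_def Let_def by (elim conjE) meson

lemma kalg_smult_closed: "x \<in> alg_carrier A \<Longrightarrow> alg_smult A a x \<in> alg_carrier A"
  using A unfolding is_kalg_def Let_def by (elim conjE) meson

lemma kalg_add_assoc:
  "x \<in> alg_carrier A \<Longrightarrow> y \<in> alg_carrier A \<Longrightarrow> z \<in> alg_carrier A \<Longrightarrow>
    alg_add A (alg_add A x y) z = alg_add A x (alg_add A y z)"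
  using A unfolding is_kalg_def Let_def by (elim conjE) meson

lemma kalg_add_commute: "x \<in> alg_carrier A \<Longrightarrow> y \<in> alg_carrier A \<Longrightarrow> alg_add A x y = alg_add A y x"
  using A unfolding is_kalg_def Let_def by (elim conjE) meson

lemma kalg_add_zero_left: "x \<in> alg_carrier A \<Longrightarrow> alg_add A (alg_zero A) x = x"
  using A unfolding is_kalg_def Let_def by (elim conjE) meson

lemma kalg_add_inverse: "x \<in> alg_carrier A \<Longrightarrow> \<exists>y\<in>alg_carrier A. alg_add A x y = alg_zero A"
  using A unfolding is_kalg_def Let_def by (elim conjE) meson

lemma kalg_smult_add_right:
  "x \<in> alg_carrier A \<Longrightarrow> y \<in> alg_carrier A \<Longrightarrow>
    alg_smult A a (alg_add A x y) = alg_add A (alg_smult A a x) (alg_smult A a y)"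
  using A unfolding is_kalg_def Let_def by (elim conjE) meson

lemma kalg_smult_add_left:
  "x \<in> alg_carrier A \<Longrightarrow> alg_smult A (a + b) x = alg_add A (alg_smult A a x) (alg_smult A b x)"
  using A unfolding is_kalg_def Let_def by (elim conjE) meson

lemma kalg_smult_assoc:
  "x \<in> alg_carrier A \<Longrightarrow> alg_smult A (a * b) x = alg_smult A a (alg_smult A b x)"
  using A unfolding is_kalg_def Let_def by (elim conjE) meson

lemma kalg_smult_one: "x \<in> alg_carrier A \<Longrightarrow> alg_smult A 1 x = x"
  using A unfolding is_kalg_def Let_def by (elim conjE) meson

lemma kalg_mult_add_left:
  "x \<in> alg_carrier A \<Longrightarrow> y \<in> alg_carrier A \<Longrightarrow> z \<in> alg_carrier A \<Longrightarrow>
    alg_mult A (alg_add A x y) z = alg_add A (alg_mult A x z) (alg_mult A y z)"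
  using A unfolding is_kalg_def Let_def by (elim conjE) meson

lemma kalg_mult_add_right:
  "x \<in> alg_carrier A \<Longrightarrow> y \<in> alg_carrier A \<Longrightarrow> z \<in> alg_carrier A \<Longrightarrow>
    alg_mult A x (alg_add A y z) = alg_add A (alg_mult A x y) (alg_mult A x z)"
  using A unfolding is_kalg_def Let_def by (elim conjE) meson

lemma kalg_mult_smult_left:
  "x \<in> alg_carrier A \<Longrightarrow> y \<in> alg_carrier A \<Longrightarrow>
    alg_mult A (alg_smult A a x) y = alg_smult A a (alg_mult A x y)"
  using A unfolding is_kalg_def Let_def by (elim conjE) meson

lemma kalg_mult_smult_right:
  "x \<in> alg_carrier A \<Longrightarrow> y \<in> alg_carrier A \<Longrightarrow>
    alg_mult A x (alg_smult A a y) = alg_smult A a (alg_mult A x y)"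
  using A unfolding is_kalg_def Let_def by (elim conjE) meson

lemma kalg_mult_assoc:
  "x \<in> alg_carrier A \<Longrightarrow> y \<in> alg_carrier A \<Longrightarrow> z \<in> alg_carrier A \<Longrightarrow>
    alg_mult A (alg_mult A x y) z = alg_mult A x (alg_mult A y z)"
  using A unfolding is_kalg_def Let_def by (elim conjE) meson

lemma kalg_mult_closed: "x \<in> alg_carrier A \<Longrightarrow> y \<in> alg_carrier A \<Longrightarrow> alg_mult A x y \<in> alg_carrier A"
  using A unfolding is_kalg_def Let_def by (elim conjE) meson

lemma kalg_add_zero_right: "x \<in> alg_carrier A \<Longrightarrow> alg_add A x (alg_zero A) = x"
  using kalg_add_commute kalg_add_zero_left kalg_zero_closed by metis

lemma kalg_add_left_commute:
  "x \<in> alg_carrier A \<Longrightarrow> y \<in> alg_carrier A \<Longrightarrow> z \<in> alg_carrier A \<Longrightarrow>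
    alg_add A x (alg_add A y z) = alg_add A y (alg_add A x z)"
  using kalg_add_assoc kalg_add_commute by metis

lemmas kalg_add_ac = kalg_add_assoc kalg_add_commute kalg_add_left_commute

lemma kalg_add_right_cancel:
  assumes x: "x \<in> alg_carrier A" and y: "y \<in> alg_carrier A" and z: "z \<in> alg_carrier A"
    and eq: "alg_add A x z = alg_add A y z"
  shows "x = y"
proof -
  obtain w where w: "w \<in> alg_carrier A" "alg_add A z w = alg_zero A"
    using kalg_add_inverse[OF z] by blast
  have "x = alg_add A (alg_add A x z) w"
    using x z w by (simp add: kalg_add_assoc kalg_add_zero_right)
  also have "\<dots> = y"
    using y z w by (simp add: eq kalg_add_assoc kalg_add_zero_right)
  finally show ?thesis .
qed

lemma kalg_add_idem_zero:
  "x \<in> alg_carrier A \<Longrightarrow> alg_add A x x = x \<Longrightarrow> x = alg_zero A"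
  by (rule kalg_add_right_cancel[of x _ x]) (simp_all add: kalg_zero_closed kalg_add_zero_left)

lemma kalg_smult_zero_right: "alg_smult A a (alg_zero A) = alg_zero A"
  by (rule kalg_add_idem_zero)
    (simp_all add: kalg_smult_closed kalg_zero_closed flip: kalg_smult_add_right,
     simp add: kalg_zero_closed kalg_add_zero_left)

lemma kalg_smult_zero_left: "x \<in> alg_carrier A \<Longrightarrow> alg_smult A 0 x = alg_zero A"
  by (rule kalg_add_idem_zero) (simp_all add: kalg_smult_closed flip: kalg_smult_add_left)

lemma kalg_smult_neg_cancel:
  "x \<in> alg_carrier A \<Longrightarrow> alg_add A (alg_smult A t x) (alg_smult A (- t) x) = alg_zero A"
  by (simp add: kalg_smult_zero_left flip: kalg_smult_add_left)

lemma kalg_mult_zero_left: "x \<in> alg_carrier A \<Longrightarrow> alg_mult A (alg_zero A) x = alg_zero A"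
  by (rule kalg_add_idem_zero)
    (simp_all add: kalg_mult_closed kalg_zero_closed flip: kalg_mult_add_left,
     simp add: kalg_zero_closed kalg_add_zero_left)

lemma kalg_mult_zero_right: "x \<in> alg_carrier A \<Longrightarrow> alg_mult A x (alg_zero A) = alg_zero A"
  by (rule kalg_add_idem_zero)
    (simp_all add: kalg_mult_closed kalg_zero_closed flip: kalg_mult_add_right,
     simp add: kalg_zero_closed kalg_add_zero_left)

lemma alg_sum_list_closed:
  "(\<And>x. x \<in> set xs \<Longrightarrow> g x \<in> alg_carrier A) \<Longrightarrow> alg_sum_list A g xs \<in> alg_carrier A"
  by (induction xs) (auto simp: kalg_zero_closed kalg_add_closed)

lemma lin_comb_closed: "set xs \<subseteq> alg_carrier A \<Longrightarrow> lin_comb A c xs \<in> alg_carrier A"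
  unfolding lin_comb_conv_alg_sum_list
  by (rule alg_sum_list_closed) (auto simp: kalg_smult_closed)

lemma alg_sum_list_zero:
  "(\<And>x. x \<in> set xs \<Longrightarrow> g x = alg_zero A) \<Longrightarrow> alg_sum_list A g xs = alg_zero A"
  by (induction xs) (auto simp: kalg_add_zero_left kalg_zero_closed)

lemma alg_sum_list_append:
  assumes "\<And>x. x \<in> set (xs @ ys) \<Longrightarrow> g x \<in> alg_carrier A"
  shows "alg_sum_list A g (xs @ ys) = alg_add A (alg_sum_list A g xs) (alg_sum_list A g ys)"
  using assms
  by (induction xs)
    (auto simp: kalg_add_zero_left kalg_add_assoc alg_sum_list_closed)

lemma alg_sum_list_filter:
  assumes "\<And>x. x \<in> set xs \<Longrightarrow> g x \<in> alg_carrier A"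
  shows "alg_sum_list A g xs =
    alg_add A (alg_sum_list A g (filter P xs)) (alg_sum_list A g (filter (\<lambda>x. \<not> P x) xs))"
  using assms
proof (induction xs)
  case Nil
  then show ?case by (simp add: kalg_add_zero_left kalg_zero_closed)
next
  case (Cons a xs)
  have "g a \<in> alg_carrier A" "alg_sum_list A g (filter P xs) \<in> alg_carrier A"
    "alg_sum_list A g (filter (\<lambda>x. \<not> P x) xs) \<in> alg_carrier A"
    using Cons.prems by (auto intro: alg_sum_list_closed)
  with Cons show ?case by (simp add: kalg_add_ac)
qed

lemma alg_sum_list_add:
  assumes "\<And>x. x \<in> set xs \<Longrightarrow> g x \<in> alg_carrier A" "\<And>x. x \<in> set xs \<Longrightarrow> h x \<in> alg_carrier A"
  shows "alg_sum_list A (\<lambda>x. alg_add A (g x) (h x)) xs =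
    alg_add A (alg_sum_list A g xs) (alg_sum_list A h xs)"
  using assms
proof (induction xs)
  case Nil
  then show ?case by (simp add: kalg_add_zero_left kalg_zero_closed)
next
  case (Cons a xs)
  have "g a \<in> alg_carrier A" "h a \<in> alg_carrier A" "alg_sum_list A g xs \<in> alg_carrier A"
    "alg_sum_list A h xs \<in> alg_carrier A"
    using Cons.prems by (auto intro: alg_sum_list_closed)
  moreover have "alg_sum_list A (\<lambda>x. alg_add A (g x) (h x)) xs =
      alg_add A (alg_sum_list A g xs) (alg_sum_list A h xs)"
    using Cons by simp
  ultimately show ?case by (simp add: kalg_add_ac kalg_add_closed)
qed

lemma alg_sum_list_smult:
  "e \<in> alg_carrier A \<Longrightarrow>
    alg_sum_list A (\<lambda>x. alg_smult A (t x) e) xs = alg_smult A (sum_list (map t xs)) e"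
  by (induction xs) (auto simp: kalg_smult_zero_left kalg_smult_add_left)

lemma lin_comb_insert:
  assumes "distinct xs" "set xs \<subseteq> alg_carrier A" "e \<in> alg_carrier A"
  shows "lin_comb A (c(e := (if e \<in> set xs then c e else 0) + t)) (List.insert e xs) =
    alg_add A (lin_comb A c xs) (alg_smult A t e)"
proof (cases "e \<in> set xs")
  case True
  let ?g = "\<lambda>c b. alg_smult A (c b) b" and ?c' = "c(e := c e + t)"
  let ?rest = "\<lambda>c. alg_sum_list A (?g c) (filter (\<lambda>b. b \<noteq> e) xs)"
  have split: "lin_comb A c xs = alg_add A (alg_smult A (c e) e) (?rest c)" for c
  proof -
    have "filter (\<lambda>b. b = e) xs = [e]"
      by (rule filter_eq_singleton[OF assms(1) True])
    moreover have "\<And>b. b \<in> set xs \<Longrightarrow> ?g c b \<in> alg_carrier A"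
      using assms(2) by (auto simp: kalg_smult_closed)
    ultimately show ?thesis
      unfolding lin_comb_conv_alg_sum_list
      using alg_sum_list_filter[of xs "?g c" "\<lambda>b. b = e"] assms(3)
      by (simp add: kalg_smult_closed kalg_add_zero_right)
  qed
  have "?rest ?c' = ?rest c"
    by (rule alg_sum_list_cong) simp
  moreover have "?rest c \<in> alg_carrier A"
    using assms(2) by (auto intro!: alg_sum_list_closed simp: kalg_smult_closed)
  ultimately show ?thesis
    using True split[of c] split[of ?c'] assms(3)
    by (simp add: kalg_smult_add_left kalg_add_ac kalg_smult_closed)
next
  case False
  then have "lin_comb A (c(e := t)) xs = lin_comb A c xs"
    by (intro lin_comb_cong) auto
  then show ?thesis
    using False assms by (simp add: kalg_add_commute kalg_smult_closed lin_comb_closed)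
qed

lemma lin_comb_append:
  "set (xs @ ys) \<subseteq> alg_carrier A \<Longrightarrow>
    lin_comb A c (xs @ ys) = alg_add A (lin_comb A c xs) (lin_comb A c ys)"
  unfolding lin_comb_conv_alg_sum_list by (rule alg_sum_list_append) (auto intro: kalg_smult_closed)

lemma lin_comb_filter:
  "set xs \<subseteq> alg_carrier A \<Longrightarrow>
    lin_comb A c xs = alg_add A (lin_comb A c (filter P xs)) (lin_comb A c (filter (\<lambda>x. \<not> P x) xs))"
  unfolding lin_comb_conv_alg_sum_list by (rule alg_sum_list_filter) (auto intro: kalg_smult_closed)

lemma lin_comb_map_add_right:
  assumes xs: "set xs \<subseteq> alg_carrier A" and e: "e \<in> alg_carrier A"
  shows "lin_comb A c (map (\<lambda>b. alg_add A b e) xs) =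
    alg_add A (lin_comb A (\<lambda>b. c (alg_add A b e)) xs)
      (alg_smult A (sum_list (map (\<lambda>b. c (alg_add A b e)) xs)) e)"
proof -
  let ?c = "\<lambda>b. c (alg_add A b e)"
  have "lin_comb A c (map (\<lambda>b. alg_add A b e) xs) =
      alg_sum_list A (\<lambda>b. alg_add A (alg_smult A (?c b) b) (alg_smult A (?c b) e)) xs"
    unfolding lin_comb_conv_alg_sum_list alg_sum_list_map
    using xs e by (intro alg_sum_list_cong) (auto simp: kalg_smult_add_right)
  also have "\<dots> = alg_add A (lin_comb A ?c xs) (alg_sum_list A (\<lambda>b. alg_smult A (?c b) e) xs)"
    unfolding lin_comb_conv_alg_sum_list
    using xs e by (intro alg_sum_list_add) (auto intro: kalg_smult_closed)
  finally show ?thesis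
    by (simp add: alg_sum_list_smult[OF e])
qed

lemma lin_indep_nonzero:
  assumes "lin_indep A B" "b \<in> B"
  shows "b \<noteq> alg_zero A"
proof
  assume "b = alg_zero A"
  then have "lin_comb A (\<lambda>_. 1) [b] = alg_zero A"
    by (simp add: kalg_smult_zero_right kalg_add_zero_left kalg_zero_closed)
  then have "(1::'k) = 0"
    using lin_indepD[OF assms(1), where bs = "[b]" and c = "\<lambda>_. 1" and b = b] assms(2) by simp
  then show False by simp
qed

lemma zero_in_lin_span: "alg_zero A \<in> lin_span A B"
  using lin_spanI[where bs = "[]" and B = B and A = A] by simp

lemma lin_span_subset_carrier: "B \<subseteq> alg_carrier A \<Longrightarrow> lin_span A B \<subseteq> alg_carrier A"
  unfolding lin_span_def by (auto intro: lin_comb_closed)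

lemma subset_lin_span: "B \<subseteq> alg_carrier A \<Longrightarrow> B \<subseteq> lin_span A B"
proof
  fix b assume "B \<subseteq> alg_carrier A" "b \<in> B"
  then have "lin_comb A (\<lambda>_. 1) [b] = b"
    by (auto simp: kalg_smult_one kalg_add_zero_right)
  then show "b \<in> lin_span A B"
    using lin_spanI[where bs = "[b]" and B = B and A = A and c = "\<lambda>_. 1"] \<open>b \<in> B\<close> by simp
qed

lemma lin_span_add_smult:
  assumes B: "B \<subseteq> alg_carrier A" and x: "x \<in> lin_span A B" and e: "e \<in> B"
  shows "alg_add A x (alg_smult A t e) \<in> lin_span A B"
proof -
  obtain bs c where bs: "distinct bs" "set bs \<subseteq> B" and x_eq: "x = lin_comb A c bs"
    using x unfolding lin_span_def by blast
  have "alg_add A x (alg_smult A t e) =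
      lin_comb A (c(e := (if e \<in> set bs then c e else 0) + t)) (List.insert e bs)"
    unfolding x_eq using bs(2) B e by (intro lin_comb_insert[OF bs(1), symmetric]) auto
  moreover have "distinct (List.insert e bs)" "set (List.insert e bs) \<subseteq> B"
    using bs e by auto
  ultimately show ?thesis
    using lin_spanI by metis
qed

lemma lin_span_add_lin_comb:
  assumes B: "B \<subseteq> alg_carrier A"
  shows "x \<in> lin_span A B \<Longrightarrow> set ys \<subseteq> B \<Longrightarrow> alg_add A x (lin_comb A c ys) \<in> lin_span A B"
proof (induction ys arbitrary: x)
  case Nil
  then show ?case
    using lin_span_subset_carrier[OF B] by (auto simp: kalg_add_zero_right)
next
  case (Cons y ys)
  have C: "x \<in> alg_carrier A" "alg_smult A (c y) y \<in> alg_carrier A"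
    "lin_comb A c ys \<in> alg_carrier A"
    using Cons.prems B lin_span_subset_carrier[OF B]
    by (auto intro: kalg_smult_closed lin_comb_closed)
  have "alg_add A x (alg_smult A (c y) y) \<in> lin_span A B"
    using Cons.prems by (intro lin_span_add_smult[OF B]) auto
  then have "alg_add A (alg_add A x (alg_smult A (c y) y)) (lin_comb A c ys) \<in> lin_span A B"
    using Cons by simp
  then show ?case
    using C by (simp add: kalg_add_assoc)
qed

lemma lin_span_add:
  assumes "B \<subseteq> alg_carrier A" "x \<in> lin_span A B" "y \<in> lin_span A B"
  shows "alg_add A x y \<in> lin_span A B"
proof -
  obtain ys c where "set ys \<subseteq> B" "y = lin_comb A c ys"
    using assms(3) unfolding lin_span_def by blast
  then show ?thesis
    using lin_span_add_lin_comb assms(1,2) by blast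
qed

lemma lin_span_smult:
  assumes B: "B \<subseteq> alg_carrier A" and x: "x \<in> lin_span A B"
  shows "alg_smult A a x \<in> lin_span A B"
proof -
  obtain bs c where bs: "distinct bs" "set bs \<subseteq> B" and x_eq: "x = lin_comb A c bs"
    using x unfolding lin_span_def by blast
  have "alg_smult A a (lin_comb A c bs) = lin_comb A (\<lambda>b. a * c b) bs"
    using bs(2) B
  proof (induction bs)
    case Nil
    then show ?case by (simp add: kalg_smult_zero_right)
  next
    case (Cons b bs)
    then have "b \<in> alg_carrier A" "set bs \<subseteq> alg_carrier A" by auto
    with Cons show ?case
      by (simp add: kalg_smult_add_right kalg_smult_closed lin_comb_closed
        kalg_smult_assoc)
  qed
  then show ?thesis
    using bs x_eq by (auto intro: lin_spanI)
qed

lemma lin_span_lin_comb: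
  assumes B: "B \<subseteq> alg_carrier A"
  shows "set xs \<subseteq> lin_span A B \<Longrightarrow> lin_comb A c xs \<in> lin_span A B"
proof (induction xs)
  case (Cons x xs)
  then show ?case
    by (simp add: lin_span_add[OF B] lin_span_smult[OF B])
qed (simp add: zero_in_lin_span)

lemma lin_span_alg_sum_list:
  assumes B: "B \<subseteq> alg_carrier A"
  shows "(\<And>j. j \<in> set js \<Longrightarrow> g j \<in> lin_span A B) \<Longrightarrow> alg_sum_list A g js \<in> lin_span A B"
proof (induction js)
  case (Cons j js)
  then show ?case
    by (simp add: lin_span_add[OF B])
qed (simp add: zero_in_lin_span)

section \<open>Shearing a basis\<close>

lemma lin_indep_add_smult_eq_zero:
  assumes indep: "lin_indep A B" and B: "B \<subseteq> alg_carrier A"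
    and xs: "distinct xs" "set xs \<subseteq> B" and e: "e \<in> B"
    and zero: "alg_add A (lin_comb A d xs) (alg_smult A t e) = alg_zero A"
  shows "\<forall>b\<in>set xs - {e}. d b = 0" and "(if e \<in> set xs then d e else 0) + t = 0"
proof -
  let ?d = "d(e := (if e \<in> set xs then d e else 0) + t)"
  have "lin_comb A ?d (List.insert e xs) = alg_add A (lin_comb A d xs) (alg_smult A t e)"
    using xs(2) B e by (intro lin_comb_insert[OF xs(1)]) auto
  then have "lin_comb A ?d (List.insert e xs) = alg_zero A"
    using zero by simp
  moreover have "distinct (List.insert e xs)" "set (List.insert e xs) \<subseteq> B"
    using xs e by auto
  ultimately have d0: "?d b = 0" if "b \<in> set (List.insert e xs)" for b
    using lin_indepD[OF indep] that by blast
  show "\<forall>b\<in>set xs - {e}. d b = 0"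
  proof
    fix b assume "b \<in> set xs - {e}"
    then show "d b = 0" using d0[of b] by simp
  qed
  show "(if e \<in> set xs then d e else 0) + t = 0"
    using d0[of e] by simp
qed

lemma lin_span_shear:
  assumes C: "B1 \<union> B2 \<subseteq> alg_carrier A" and e: "e \<in> B1"
  shows "lin_span A (B1 \<union> B2) \<subseteq> lin_span A (B1 \<union> (\<lambda>b. alg_add A b e) ` B2)"
proof -
  let ?B = "B1 \<union> (\<lambda>b. alg_add A b e) ` B2"
  have eC: "e \<in> alg_carrier A" using C e by auto
  have C': "?B \<subseteq> alg_carrier A"
    using C eC by (auto intro: kalg_add_closed)
  have "b \<in> lin_span A ?B" if b: "b \<in> B2" for b
  proof -
    have bC: "b \<in> alg_carrier A" using b C by auto
    have "alg_add A b e \<in> lin_span A ?B"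
      using subset_lin_span[OF C'] b by auto
    then have "alg_add A (alg_add A b e) (alg_smult A (- 1) e) \<in> lin_span A ?B"
      using e by (intro lin_span_add_smult[OF C']) auto
    moreover have "alg_add A (alg_add A b e) (alg_smult A (- 1) e) = b"
      using kalg_smult_neg_cancel[OF eC, of 1] bC eC
      by (simp add: kalg_add_assoc kalg_smult_closed kalg_smult_one
          kalg_add_zero_right)
    ultimately show ?thesis by simp
  qed
  then have "B1 \<union> B2 \<subseteq> lin_span A ?B"
    using subset_lin_span[OF C'] by auto
  then show ?thesis
    unfolding lin_span_def[of A "B1 \<union> B2"] using lin_span_lin_comb[OF C'] by blast
qed

lemma lin_indep_shear:
  assumes indep: "lin_indep A (B1 \<union> B2)" and C: "B1 \<union> B2 \<subseteq> alg_carrier A"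
    and disj: "B1 \<inter> B2 = {}" and e: "e \<in> B1"
  shows "lin_indep A (B1 \<union> (\<lambda>b. alg_add A b e) ` B2)"
proof -
  define f where "f b = alg_add A b e" for b
  have eC: "e \<in> alg_carrier A" using C e by auto
  have "\<forall>b\<in>set L. c b = 0"
    if L: "distinct L" "set L \<subseteq> B1 \<union> f ` B2" and zero: "lin_comb A c L = alg_zero A" for L c
  proof -
    define L1 where "L1 = filter (\<lambda>b. b \<in> B1) L"
    define L2 where "L2 = filter (\<lambda>b. b \<notin> B1) L"
    have "L2 \<in> lists (f ` B2)" using L unfolding L2_def by auto
    then obtain M where M_L2: "map f M = L2" and M_B2: "set M \<subseteq> B2"
      unfolding lists_image by auto
    \<comment> \<open>Pulled back to \<open>B1 \<union> B2\<close>, the shifted vectors contribute their coefficients once more, summed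
      to \<open>T\<close>, at \<open>e\<close>.\<close>
    define d where "d b = (if b \<in> B1 then c b else c (f b))" for b
    define T where "T = sum_list (map (\<lambda>b. c (f b)) M)"
    have L1_B1: "set L1 \<subseteq> B1" unfolding L1_def by auto
    have LC: "set L \<subseteq> alg_carrier A" using L(2) C eC by (auto simp: f_def intro: kalg_add_closed)
    have MC: "set M \<subseteq> alg_carrier A" using M_B2 C by auto
    have dist: "distinct (L1 @ M)"
      using L(1) M_L2 M_B2 L1_B1 disj unfolding L1_def L2_def
      by (auto simp: distinct_map dest!: arg_cong[where f = distinct])
    have "lin_comb A c L2 = alg_add A (lin_comb A (\<lambda>b. c (f b)) M) (alg_smult A T e)"
      unfolding M_L2[symmetric] T_def f_def by (rule lin_comb_map_add_right[OF MC eC])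
    also have "lin_comb A (\<lambda>b. c (f b)) M = lin_comb A d M"
      using M_B2 disj by (intro lin_comb_cong) (auto simp: d_def)
    moreover have "lin_comb A c L1 = lin_comb A d L1"
      using L1_B1 by (intro lin_comb_cong) (auto simp: d_def)
    ultimately have "lin_comb A c L =
        alg_add A (alg_add A (lin_comb A d L1) (lin_comb A d M)) (alg_smult A T e)"
      using lin_comb_filter[OF LC, of c "\<lambda>b. b \<in> B1"] L1_B1 MC C eC
      unfolding L1_def L2_def
      by (simp add: kalg_add_assoc lin_comb_closed kalg_smult_closed subset_eq)
    moreover have "set (L1 @ M) \<subseteq> alg_carrier A" using L1_B1 MC C by auto
    ultimately have "alg_add A (lin_comb A d (L1 @ M)) (alg_smult A T e) = alg_zero A"
      using zero by (simp add: lin_comb_append)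
    moreover have "set (L1 @ M) \<subseteq> B1 \<union> B2" "e \<in> B1 \<union> B2" using L1_B1 M_B2 e by auto
    ultimately have d0: "\<forall>b\<in>set (L1 @ M) - {e}. d b = 0"
        "(if e \<in> set (L1 @ M) then d e else 0) + T = 0"
      using lin_indep_add_smult_eq_zero[OF indep C dist] by blast+
    have M0: "c (f b) = 0" if "b \<in> set M" for b
    proof -
      have "b \<notin> B1" using that M_B2 disj by auto
      then have "b \<in> set (L1 @ M) - {e}" using that e by auto
      then have "d b = 0" using d0(1) by blast
      then show ?thesis using \<open>b \<notin> B1\<close> unfolding d_def by simp
    qed
    have L2_0: "c b = 0" if "b \<in> set L2" for b
      using M0 that unfolding M_L2[symmetric] by auto
    have "T = 0" unfolding T_def using M0 by (induction M) auto
    then have L1_0: "c b = 0" if "b \<in> set L1" for b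
      using d0 that L1_B1 M_B2 e unfolding d_def by (auto split: if_splits)
    show ?thesis using L1_0 L2_0 unfolding L1_def L2_def by auto
  qed
  then show ?thesis
    unfolding lin_indep_def f_def by blast
qed

lemma is_lin_basis_shear:
  assumes B: "is_lin_basis A (B1 \<union> B2)" and disj: "B1 \<inter> B2 = {}" and e: "e \<in> B1"
  shows "is_lin_basis A (B1 \<union> (\<lambda>b. alg_add A b e) ` B2)"
proof -
  have C: "B1 \<union> B2 \<subseteq> alg_carrier A" and indep: "lin_indep A (B1 \<union> B2)"
    and span: "alg_carrier A \<subseteq> lin_span A (B1 \<union> B2)"
    using B by (auto simp: is_lin_basis_iff)
  have "(\<lambda>b. alg_add A b e) ` B2 \<subseteq> alg_carrier A"
    using C e by (auto intro: kalg_add_closed)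
  then show ?thesis
    unfolding is_lin_basis_iff
    using C lin_indep_shear[OF indep C disj e] span lin_span_shear[OF C e] by blast
qed

end

section \<open>The product algebra and its coordinate basis\<close>

lemma is_kalg_prod_alg:
  assumes R: "\<And>i. i < n \<Longrightarrow> is_kalg (R i)"
  shows "is_kalg (prod_alg n R)"
proof -
  have neg: "\<exists>y\<in>\<Pi>\<^sub>E i\<in>{..<n}. alg_carrier (R i).
      (\<lambda>i\<in>{..<n}. alg_add (R i) (x i) (y i)) = (\<lambda>i\<in>{..<n}. alg_zero (R i))"
    if x: "x \<in> (\<Pi>\<^sub>E i\<in>{..<n}. alg_carrier (R i))" for x
  proof -
    have "\<forall>i\<in>{..<n}. \<exists>y\<in>alg_carrier (R i). alg_add (R i) (x i) y = alg_zero (R i)"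
      using kalg_add_inverse[OF R] x by auto
    then obtain y where
      "\<forall>i\<in>{..<n}. y i \<in> alg_carrier (R i) \<and> alg_add (R i) (x i) (y i) = alg_zero (R i)"
      by metis
    then show ?thesis by (intro bexI[of _ "restrict y {..<n}"]) auto
  qed
  show ?thesis
    unfolding is_kalg_def Let_def prod_alg_def
    by (simp add: neg, intro conjI ballI allI restrict_ext;
        simp add: PiE_iff R kalg_zero_closed kalg_add_closed kalg_smult_closed kalg_mult_closed
          kalg_add_assoc kalg_add_zero_left kalg_smult_add_right kalg_smult_add_left
          kalg_smult_assoc kalg_smult_one kalg_mult_add_left kalg_mult_add_right
          kalg_mult_smult_left kalg_mult_smult_right kalg_mult_assoc)
      (simp_all add: PiE_iff R kalg_add_commute kalg_add_zero_left kalg_add_zero_right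
        kalg_smult_one kalg_zero_closed extensional_restrict cong: restrict_cong)
qed

lemma alg_sum_list_prod_alg:
  "alg_sum_list (prod_alg n R) g xs = (\<lambda>j\<in>{..<n}. alg_sum_list (R j) (\<lambda>x. g x j) xs)"
  by (induction xs) (simp_all add: prod_alg_def cong: restrict_cong)

lemma lin_comb_prod_alg:
  "lin_comb (prod_alg n R) c xs =
    (\<lambda>j\<in>{..<n}. alg_sum_list (R j) (\<lambda>b. alg_smult (R j) (c b) (b j)) xs)"
  unfolding lin_comb_conv_alg_sum_list alg_sum_list_prod_alg
  by (simp add: prod_alg_def cong: restrict_cong)

definition prod_inj :: "nat \<Rightarrow> (nat \<Rightarrow> ('k, 'a) kalg) \<Rightarrow> nat \<Rightarrow> 'a \<Rightarrow> nat \<Rightarrow> 'a" where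
  "prod_inj n R i x = (\<lambda>j\<in>{..<n}. if j = i then x else alg_zero (R j))"

lemma prod_inj_same: "i < n \<Longrightarrow> prod_inj n R i x i = x"
  by (simp add: prod_inj_def)

lemma prod_inj_in_carrier:
  "(\<And>j. j < n \<Longrightarrow> is_kalg (R j)) \<Longrightarrow> i < n \<Longrightarrow> x \<in> alg_carrier (R i) \<Longrightarrow>
    prod_inj n R i x \<in> alg_carrier (prod_alg n R)"
  by (auto simp: prod_inj_def prod_alg_def kalg_zero_closed)

lemma prod_inj_lin_comb:
  assumes R: "\<And>j. j < n \<Longrightarrow> is_kalg (R j)" and i: "i < n"
  shows "prod_inj n R i (lin_comb (R i) c ds) =
    lin_comb (prod_alg n R) (\<lambda>b. c (b i)) (map (prod_inj n R i) ds)"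
  unfolding lin_comb_prod_alg
proof (rule extensionalityI[OF _ restrict_extensional])
  show "prod_inj n R i (lin_comb (R i) c ds) \<in> extensional {..<n}"
    by (simp add: prod_inj_def)
  fix j assume j: "j \<in> {..<n}"
  show "prod_inj n R i (lin_comb (R i) c ds) j =
      (\<lambda>j\<in>{..<n}.
        alg_sum_list (R j) (\<lambda>b. alg_smult (R j) (c (b i)) (b j)) (map (prod_inj n R i) ds)) j"
  proof (cases "j = i")
    case True
    then show ?thesis
      using j by (simp add: prod_inj_same[OF i] alg_sum_list_map comp_def lin_comb_conv_alg_sum_list)
  next
    case False
    then have "alg_sum_list (R j) (\<lambda>b. alg_smult (R j) (c (b i)) (b j)) (map (prod_inj n R i) ds) =
        alg_zero (R j)"
      using j unfolding alg_sum_list_map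
      by (intro alg_sum_list_zero[OF R]) (auto simp: prod_inj_def kalg_smult_zero_right[OF R])
    then show ?thesis
      using j False by (simp add: prod_inj_def)
  qed
qed

lemma prod_alg_eq_sum_prod_inj:
  assumes R: "\<And>j. j < n \<Longrightarrow> is_kalg (R j)" and f: "f \<in> alg_carrier (prod_alg n R)"
  shows "f = alg_sum_list (prod_alg n R) (\<lambda>i. prod_inj n R i (f i)) [0..<n]"
proof -
  have "alg_sum_list (R j) (\<lambda>i. prod_inj n R i (f i) j) [0..<n] = f j" if j: "j < n" for j
  proof -
    let ?g = "\<lambda>i. if i = j then f j else alg_zero (R j)"
    have fj: "f j \<in> alg_carrier (R j)" using f j by (simp add: prod_alg_def PiE_iff)
    have "alg_sum_list (R j) (\<lambda>i. prod_inj n R i (f i) j) [0..<n] = alg_sum_list (R j) ?g [0..<n]"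
      using j by (intro alg_sum_list_cong) (auto simp: prod_inj_def)
    also have "\<dots> = alg_add (R j) (alg_sum_list (R j) ?g (filter (\<lambda>i. i = j) [0..<n]))
        (alg_sum_list (R j) ?g (filter (\<lambda>i. i \<noteq> j) [0..<n]))"
      using fj by (intro alg_sum_list_filter[OF R[OF j]]) (auto simp: kalg_zero_closed[OF R[OF j]])
    also have "filter (\<lambda>i. i = j) [0..<n] = [j]"
      using j by (intro filter_eq_singleton) auto
    also have "alg_sum_list (R j) ?g (filter (\<lambda>i. i \<noteq> j) [0..<n]) = alg_zero (R j)"
      by (rule alg_sum_list_zero[OF R[OF j]]) simp
    finally show ?thesis
      using fj by (simp add: kalg_add_zero_right[OF R[OF j]])
  qed
  moreover have "f \<in> extensional {..<n}" using f by (simp add: prod_alg_def PiE_iff)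
  ultimately show ?thesis
    unfolding alg_sum_list_prod_alg by (intro extensionalityI[OF _ restrict_extensional]) simp_all
qed

lemma lin_comb_prod_alg_component:
  assumes R: "\<And>j. j < n \<Longrightarrow> is_kalg (R j)" and B: "\<And>i. i < n \<Longrightarrow> B i \<subseteq> alg_carrier (R i)"
    and L: "set L \<subseteq> (\<Union>i<n. prod_inj n R i ` B i)" and j: "j < n"
  shows "lin_comb (prod_alg n R) c L j =
    lin_comb (R j) (\<lambda>d. c (prod_inj n R j d))
      (map (\<lambda>b. b j) (filter (\<lambda>b. b \<in> prod_inj n R j ` B j) L))"
proof -
  let ?g = "\<lambda>b. alg_smult (R j) (c b) (b j)" and ?Q = "\<lambda>b. b \<in> prod_inj n R j ` B j"
  note Rj = R[OF j]
  have gC: "?g b \<in> alg_carrier (R j)" if b: "b \<in> set L" for b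
  proof -
    obtain i d where "i < n" "d \<in> B i" "b = prod_inj n R i d"
      using b L by auto
    then have "b j \<in> alg_carrier (R j)"
      using B j by (auto simp: prod_inj_def kalg_zero_closed[OF Rj])
    then show ?thesis by (rule kalg_smult_closed[OF Rj])
  qed
  have "lin_comb (prod_alg n R) c L j = alg_sum_list (R j) ?g L"
    using j by (simp add: lin_comb_prod_alg)
  also have "\<dots> = alg_add (R j) (alg_sum_list (R j) ?g (filter ?Q L))
      (alg_sum_list (R j) ?g (filter (\<lambda>b. \<not> ?Q b) L))"
    using gC by (rule alg_sum_list_filter[OF Rj])
  also have "alg_sum_list (R j) ?g (filter (\<lambda>b. \<not> ?Q b) L) = alg_zero (R j)"
  proof (rule alg_sum_list_zero[OF Rj])
    fix b assume b: "b \<in> set (filter (\<lambda>b. \<not> ?Q b) L)"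
    then obtain i d where i: "i < n" "d \<in> B i" and b_eq: "b = prod_inj n R i d"
      using L by auto
    moreover have "i \<noteq> j" using b b_eq i by auto
    ultimately show "?g b = alg_zero (R j)"
      using j by (simp add: prod_inj_def kalg_smult_zero_right[OF Rj])
  qed
  also have "alg_sum_list (R j) ?g (filter ?Q L) =
      lin_comb (R j) (\<lambda>d. c (prod_inj n R j d)) (map (\<lambda>b. b j) (filter ?Q L))"
    unfolding lin_comb_conv_alg_sum_list alg_sum_list_map
    by (intro alg_sum_list_cong) (auto simp: prod_inj_same[OF j])
  moreover have "set (map (\<lambda>b. b j) (filter ?Q L)) \<subseteq> alg_carrier (R j)"
    using B[OF j] by (auto simp: prod_inj_same[OF j])
  ultimately show ?thesis
    by (simp add: kalg_add_zero_right[OF Rj] lin_comb_closed[OF Rj])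
qed

lemma lin_indep_prod_alg:
  assumes R: "\<And>i. i < n \<Longrightarrow> is_kalg (R i)" and BC: "\<And>i. i < n \<Longrightarrow> B i \<subseteq> alg_carrier (R i)"
    and B: "\<And>i. i < n \<Longrightarrow> lin_indep (R i) (B i)"
  shows "lin_indep (prod_alg n R) (\<Union>i<n. prod_inj n R i ` B i)"
proof -
  have "c b = 0"
    if L: "distinct L" "set L \<subseteq> (\<Union>i<n. prod_inj n R i ` B i)"
      "lin_comb (prod_alg n R) c L = alg_zero (prod_alg n R)"
      and b: "b \<in> set L" for L c b
  proof -
    obtain i d where i: "i < n" "d \<in> B i" and b_eq: "b = prod_inj n R i d"
      using b L(2) by auto
    note ii = prod_inj_same[OF i(1)]
    let ?ds = "map (\<lambda>b. b i) (filter (\<lambda>b. b \<in> prod_inj n R i ` B i) L)"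
    have "lin_comb (R i) (\<lambda>d. c (prod_inj n R i d)) ?ds = alg_zero (R i)"
      using lin_comb_prod_alg_component[OF R BC L(2) i(1), of c] L(3) i(1)
      by (simp add: prod_alg_def)
    moreover have "distinct ?ds"
      using L(1) by (auto simp: distinct_map ii intro!: inj_onI)
    moreover have "set ?ds \<subseteq> B i" by (auto simp: ii)
    moreover have "d \<in> set ?ds" using b b_eq i by (auto simp: ii intro!: image_eqI[of _ _ b])
    ultimately have "(\<lambda>d. c (prod_inj n R i d)) d = 0"
      by (intro lin_indepD[OF B[OF i(1)]])
    then show ?thesis using b_eq by simp
  qed
  then show ?thesis unfolding lin_indep_def by blast
qed

lemma lin_span_prod_alg:
  assumes R: "\<And>i. i < n \<Longrightarrow> is_kalg (R i)" and BC: "\<And>i. i < n \<Longrightarrow> B i \<subseteq> alg_carrier (R i)"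
    and B: "\<And>i. i < n \<Longrightarrow> alg_carrier (R i) \<subseteq> lin_span (R i) (B i)"
  shows "alg_carrier (prod_alg n R) \<subseteq> lin_span (prod_alg n R) (\<Union>i<n. prod_inj n R i ` B i)"
proof
  let ?P = "prod_alg n R" and ?B = "\<Union>i<n. prod_inj n R i ` B i"
  have P: "is_kalg ?P" using R by (rule is_kalg_prod_alg)
  have sub: "?B \<subseteq> alg_carrier ?P"
    using BC by (auto intro!: prod_inj_in_carrier R)
  fix f assume f: "f \<in> alg_carrier ?P"
  have "prod_inj n R i (f i) \<in> lin_span ?P ?B" if i: "i < n" for i
  proof -
    have "f i \<in> alg_carrier (R i)" using f i by (simp add: prod_alg_def PiE_iff)
    then obtain ds c where ds: "set ds \<subseteq> B i" and fi: "f i = lin_comb (R i) c ds"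
      using B[OF i] unfolding lin_span_def by blast
    have "set (map (prod_inj n R i) ds) \<subseteq> lin_span ?P ?B"
      using ds i subset_lin_span[OF P sub] by auto
    then have "lin_comb ?P (\<lambda>b. c (b i)) (map (prod_inj n R i) ds) \<in> lin_span ?P ?B"
      by (rule lin_span_lin_comb[OF P sub])
    then show ?thesis
      unfolding fi using prod_inj_lin_comb[where R = R, OF R i] by simp
  qed
  then have "alg_sum_list ?P (\<lambda>i. prod_inj n R i (f i)) [0..<n] \<in> lin_span ?P ?B"
    by (intro lin_span_alg_sum_list[OF P sub]) auto
  then show "f \<in> lin_span ?P ?B"
    using prod_alg_eq_sum_prod_inj[where R = R, OF R f] by simp
qed

lemma is_lin_basis_prod_alg:
  assumes R: "\<And>i. i < n \<Longrightarrow> is_kalg (R i)" and B: "\<And>i. i < n \<Longrightarrow> is_lin_basis (R i) (B i)"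
  shows "is_lin_basis (prod_alg n R) (\<Union>i<n. prod_inj n R i ` B i)"
  unfolding is_lin_basis_iff
proof (intro conjI)
  have BC: "B i \<subseteq> alg_carrier (R i)" and indep: "lin_indep (R i) (B i)"
    and span: "alg_carrier (R i) \<subseteq> lin_span (R i) (B i)" if "i < n" for i
    using B[OF that] by (simp_all add: is_lin_basis_iff)
  then show "(\<Union>i<n. prod_inj n R i ` B i) \<subseteq> alg_carrier (prod_alg n R)"
    by (auto intro!: prod_inj_in_carrier R)
  show "lin_indep (prod_alg n R) (\<Union>i<n. prod_inj n R i ` B i)"
    by (rule lin_indep_prod_alg[where R = R, OF R BC indep])
  show "alg_carrier (prod_alg n R) \<subseteq> lin_span (prod_alg n R) (\<Union>i<n. prod_inj n R i ` B i)"
    by (rule lin_span_prod_alg[where R = R, OF R BC span])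
qed

section \<open>The twisted basis of the product\<close>

definition prod_pair :: "nat \<Rightarrow> (nat \<Rightarrow> ('k, 'a) kalg) \<Rightarrow> 'a \<Rightarrow> nat \<Rightarrow> 'a \<Rightarrow> nat \<Rightarrow> 'a" where
  "prod_pair n R x i d = (\<lambda>j\<in>{..<n}. if j = 0 then x else if j = i then d else alg_zero (R j))"

definition twisted_prod_basis ::
    "nat \<Rightarrow> (nat \<Rightarrow> ('k, 'a) kalg) \<Rightarrow> 'a set \<Rightarrow> 'a \<Rightarrow> (nat \<Rightarrow> 'a set) \<Rightarrow> (nat \<Rightarrow> 'a) set" where
  "twisted_prod_basis n R B0 e B =
    prod_inj n R 0 ` B0 \<union> (\<Union>i\<in>{0<..<n}. prod_pair n R e i ` B i)"

lemma prod_inj_zero_neq: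
  assumes "0 < i" "i < n" "d \<noteq> alg_zero (R i)"
  shows "prod_inj n R 0 x \<noteq> prod_inj n R i d"
proof
  assume "prod_inj n R 0 x = prod_inj n R i d"
  then have "prod_inj n R 0 x i = d" using prod_inj_same[OF assms(2)] by simp
  moreover have "prod_inj n R 0 x i = alg_zero (R i)" using assms(1,2) by (simp add: prod_inj_def)
  ultimately show False using assms(3) by simp
qed

lemma prod_pair_zero: "prod_pair n R x i (alg_zero (R i)) = prod_inj n R 0 x"
  by (auto simp: prod_pair_def prod_inj_def cong: restrict_cong)

lemma prod_pair_index_zero: "prod_pair n R x 0 d = prod_inj n R 0 x"
  by (auto simp: prod_pair_def prod_inj_def cong: restrict_cong)

lemma prod_inj_add_prod_inj_zero:
  assumes R: "\<And>j. j < n \<Longrightarrow> is_kalg (R j)" and i: "0 < i" "i < n"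
    and d: "d \<in> alg_carrier (R i)" and e: "e \<in> alg_carrier (R 0)"
  shows "alg_add (prod_alg n R) (prod_inj n R i d) (prod_inj n R 0 e) = prod_pair n R e i d"
  unfolding prod_alg_def prod_inj_def prod_pair_def
  using i d e
  by (auto simp: kalg_add_zero_left[OF R] kalg_add_zero_right[OF R] kalg_zero_closed[OF R]
      cong: restrict_cong)

lemma prod_pair_mult:
  assumes R: "\<And>j. j < n \<Longrightarrow> is_kalg (R j)" and i: "i < n" and k: "k < n"
    and c: "c \<in> alg_carrier (R i)" and d: "d \<in> alg_carrier (R k)"
  shows "alg_mult (prod_alg n R) (prod_pair n R x i c) (prod_pair n R y k d) =
    prod_pair n R (alg_mult (R 0) x y) (if i = k then i else 0) (alg_mult (R i) c d)"
  unfolding prod_alg_def prod_pair_def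
  using i k c d
  by (auto simp: kalg_mult_zero_left[OF R] kalg_mult_zero_right[OF R] kalg_zero_closed[OF R]
      cong: restrict_cong)

lemma is_lin_basis_twisted_prod_basis:
  assumes R: "\<And>i. i < n \<Longrightarrow> is_kalg (R i)" and n: "0 < n"
    and B0: "is_lin_basis (R 0) B0" and e: "e \<in> B0"
    and B: "\<And>i. 0 < i \<Longrightarrow> i < n \<Longrightarrow> is_lin_basis (R i) (B i)"
  shows "is_lin_basis (prod_alg n R) (twisted_prod_basis n R B0 e B)"
proof -
  let ?P = "prod_alg n R" and ?B1 = "prod_inj n R 0 ` B0"
  let ?B2 = "\<Union>i\<in>{0<..<n}. prod_inj n R i ` B i"
  have BC: "B i \<subseteq> alg_carrier (R i)" if "0 < i" "i < n" for i
    using B[OF that] by (simp add: is_lin_basis_iff)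
  have "{..<n} = insert 0 {0<..<n}" using n by auto
  then have "(\<Union>i<n. prod_inj n R i ` (if i = 0 then B0 else B i)) = ?B1 \<union> ?B2"
    by auto
  moreover have "is_lin_basis ?P (\<Union>i<n. prod_inj n R i ` (if i = 0 then B0 else B i))"
    using R B0 B by (intro is_lin_basis_prod_alg) auto
  moreover have "?B1 \<inter> ?B2 = {}"
  proof -
    have "prod_inj n R 0 x \<noteq> prod_inj n R i d" if i: "0 < i" "i < n" and d: "d \<in> B i" for x i d
      using B[OF i] lin_indep_nonzero[OF R[OF i(2)] _ d] i
      by (intro prod_inj_zero_neq) (auto simp: is_lin_basis_iff)
    then show ?thesis by auto
  qed
  ultimately have "is_lin_basis ?P (?B1 \<union> (\<lambda>b. alg_add ?P b (prod_inj n R 0 e)) ` ?B2)"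
    using e by (intro is_lin_basis_shear[OF is_kalg_prod_alg[OF R]]) auto
  moreover have "(\<lambda>b. alg_add ?P b (prod_inj n R 0 e)) ` ?B2 =
      (\<Union>i\<in>{0<..<n}. prod_pair n R e i ` B i)"
  proof -
    have eC: "e \<in> alg_carrier (R 0)" using B0 e by (auto simp: is_lin_basis_iff)
    have "(\<lambda>b. alg_add ?P b (prod_inj n R 0 e)) ` prod_inj n R i ` B i = prod_pair n R e i ` B i"
      if "0 < i" "i < n" for i
      unfolding image_image
      using BC[OF that] prod_inj_add_prod_inj_zero[where R = R, OF R that _ eC]
      by (intro image_cong) auto
    then show ?thesis
      unfolding image_UN by (intro SUP_cong) auto
  qed
  ultimately show ?thesis
    unfolding twisted_prod_basis_def by simp
qed

lemma twisted_prod_basisE: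
  assumes b: "b \<in> twisted_prod_basis n R B0 e B" and n: "0 < n" and R0: "is_kalg (R 0)"
    and e: "e \<in> B0" and BC: "\<And>i. 0 < i \<Longrightarrow> i < n \<Longrightarrow> B i \<subseteq> alg_carrier (R i)"
  obtains x i c where "b = prod_pair n R x i c" "i < n" "c \<in> alg_carrier (R i)" "x \<in> B0"
    "i = 0 \<or> x = e \<and> c \<in> B i"
proof -
  consider x where "x \<in> B0" "b = prod_inj n R 0 x"
    | i c where "0 < i" "i < n" "c \<in> B i" "b = prod_pair n R e i c"
    using b unfolding twisted_prod_basis_def by (elim UnE UN_E imageE) auto
  then show ?thesis
  proof cases
    case 1
    then show ?thesis
      using that[of x 0 "alg_zero (R 0)"] n kalg_zero_closed[OF R0]
      by (simp add: prod_pair_index_zero)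
  next
    case 2
    then show ?thesis
      using that[of e i c] BC e by auto
  qed
qed

lemma twisted_prod_basis_mult_closed:
  assumes R: "\<And>i. i < n \<Longrightarrow> is_kalg (R i)" and n: "0 < n"
    and B0: "strong_mult_basis (R 0) B0" and e: "e \<in> B0" "alg_mult (R 0) e e = e"
    and B: "\<And>i. 0 < i \<Longrightarrow> i < n \<Longrightarrow> mult_basis (R i) (B i)"
    and b: "b \<in> twisted_prod_basis n R B0 e B" and b': "b' \<in> twisted_prod_basis n R B0 e B"
  shows "alg_mult (prod_alg n R) b b' \<in> twisted_prod_basis n R B0 e B"
proof -
  let ?T = "twisted_prod_basis n R B0 e B"
  have inj0: "prod_inj n R 0 x \<in> ?T" if "x \<in> B0" for x
    using that by (simp add: twisted_prod_basis_def)
  have pair: "prod_pair n R e i c \<in> ?T" if "0 < i" "i < n" "c \<in> B i" for i c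
    unfolding twisted_prod_basis_def using that by (intro UnI2 UN_I[of i]) auto
  have BC: "B i \<subseteq> alg_carrier (R i)" if "0 < i" "i < n" for i
    using B[OF that] by (simp add: mult_basis_def is_lin_basis_iff)
  note cases = twisted_prod_basisE[where R = R and B = B, OF _ n R[OF n] e(1) BC]
  obtain x i c where xb: "b = prod_pair n R x i c" "i < n" "c \<in> alg_carrier (R i)" "x \<in> B0"
      and bi: "i = 0 \<or> x = e \<and> c \<in> B i"
    using cases[OF b] by blast
  obtain y k d where yb: "b' = prod_pair n R y k d" "k < n" "d \<in> alg_carrier (R k)" "y \<in> B0"
      and bk: "k = 0 \<or> y = e \<and> d \<in> B k"
    using cases[OF b'] by blast
  have prod: "alg_mult (prod_alg n R) b b' =
      prod_pair n R (alg_mult (R 0) x y) (if i = k then i else 0) (alg_mult (R i) c d)"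
    unfolding xb(1) yb(1) by (rule prod_pair_mult[where R = R, OF R xb(2) yb(2) xb(3) yb(3)])
  show ?thesis
  proof (cases "i = k \<and> i \<noteq> 0")
    case True
    then have "x = e" "y = e" "c \<in> B i" "d \<in> B i" using bi bk by auto
    then have "alg_mult (R i) c d = alg_zero (R i) \<or> alg_mult (R i) c d \<in> B i"
      using B True xb(2) by (auto simp: mult_basis_def)
    moreover have "alg_mult (prod_alg n R) b b' = prod_pair n R e i (alg_mult (R i) c d)"
      using prod True \<open>x = e\<close> \<open>y = e\<close> e(2) by simp
    ultimately show ?thesis
      using True xb(2) inj0[OF e(1)] pair by (auto simp: prod_pair_zero)
  next
    case False
    have "alg_mult (R 0) x y \<in> B0" using B0 xb(4) yb(4) by (simp add: strong_mult_basis_def)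
    moreover have "alg_mult (prod_alg n R) b b' = prod_inj n R 0 (alg_mult (R 0) x y)"
      using prod False by (auto simp: prod_pair_index_zero)
    ultimately show ?thesis
      using inj0 by simp
  qed
qed

theorem lemma5p5:
  fixes R :: "nat \<Rightarrow> ('k::field, 'a) kalg"
    and n :: nat and B0 :: "'a set" and e :: 'a
  assumes "0 < n"
    and "\<forall>i<n. is_kalg (R i)"
    and "strong_mult_basis (R 0) B0"
    and "e \<in> B0" and "e \<noteq> alg_zero (R 0)" and "alg_mult (R 0) e e = e"
    and "\<forall>i. 0 < i \<and> i < n \<longrightarrow> (\<exists>B. mult_basis (R i) B)"
  shows "\<exists>B. strong_mult_basis (prod_alg n R) B"
proof -
  have R: "\<And>i. i < n \<Longrightarrow> is_kalg (R i)" using assms(2) by blast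
  obtain B where B: "\<And>i. 0 < i \<Longrightarrow> i < n \<Longrightarrow> mult_basis (R i) (B i)"
    using assms(7) by metis
  have "is_lin_basis (prod_alg n R) (twisted_prod_basis n R B0 e B)"
    using assms(1,3,4) B
    by (intro is_lin_basis_twisted_prod_basis[where R = R, OF R])
      (auto simp: strong_mult_basis_def mult_basis_def)
  moreover have "\<forall>b\<in>twisted_prod_basis n R B0 e B. \<forall>b'\<in>twisted_prod_basis n R B0 e B.
      alg_mult (prod_alg n R) b b' \<in> twisted_prod_basis n R B0 e B"
    using twisted_prod_basis_mult_closed[where R = R, OF R assms(1,3,4,6) B] by blast
  ultimately show ?thesis
    unfolding strong_mult_basis_def by blast
qed

end
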